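(* Let $(a_n)$ be positive reals and $(b_n)$ nonzero complex numbers. Suppose there are constants $0<\nu_0<\nu_1<\nu_2<1$ with $$a_{n+1}/a_n<\nu_0\quad\text{and}\quad \nu_1<|b_{n+1}/b_n|<\nu_2\quad\text{for all }n\in\mathbb{N}.$$ Then $\pi\in\ell^\infty$ and $\Phi$ spatially exponentially decays.
   Context: $\pi_n:=2\prod_{m\ge1,\,m\ne n}\frac{1+a_m/a_n}{1-a_m/a_n}$. $\Phi=[\phi_{ij}]_{i,j\ge1}$ with $\phi_{ij}:=\frac{|b_i/b_j|}{1+a_i/a_j}$. $\Phi$ spatially exponentially decays if there are $C>0$, $\mu\in(0,1)$ with $\phi_{ij}\le C\mu^{|i-j|}$ for all $i,j\in\mathbb{N}$. *)

theory Defs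
  imports "HOL-Analysis.Analysis"
begin

(* Sequences are indexed by n \<ge> 1; values at index 0 are irrelevant. *)

definition pi_factor :: "(nat \<Rightarrow> real) \<Rightarrow> nat \<Rightarrow> nat \<Rightarrow> real" where
  "pi_factor a n m = (if m = 0 \<or> m = n then 1 else (1 + a m / a n) / (1 - a m / a n))"

definition pi_seq :: "(nat \<Rightarrow> real) \<Rightarrow> nat \<Rightarrow> real" where
  "pi_seq a n = 2 * prodinf (pi_factor a n)"

definition phi :: "(nat \<Rightarrow> real) \<Rightarrow> (nat \<Rightarrow> complex) \<Rightarrow> nat \<Rightarrow> nat \<Rightarrow> real" where
  "phi a b i j = cmod (b i / b j) / (1 + a i / a j)"

definition spatially_exp_decays :: "(nat \<Rightarrow> nat \<Rightarrow> real) \<Rightarrow> bool" where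
  "spatially_exp_decays F \<longleftrightarrow>
     (\<exists>C>0. \<exists>\<mu>. 0 < \<mu> \<and> \<mu> < 1 \<and>
        (\<forall>i\<ge>1. \<forall>j\<ge>1. F i j \<le> C * \<mu> ^ nat \<bar>int i - int j\<bar>))"

definition pi_in_linfty :: "(nat \<Rightarrow> real) \<Rightarrow> bool" where
  "pi_in_linfty a \<longleftrightarrow>
     (\<forall>n\<ge>1. convergent_prod (pi_factor a n)) \<and> (\<exists>B. \<forall>n\<ge>1. \<bar>pi_seq a n\<bar> \<le> B)"

end

theory Submission
  imports Defs
begin

text \<open>Each factor of \<open>\<pi>_n\<close> equals \<open>\<plusminus>(1 + y)/(1 - y)\<close>, where \<open>y \<le> \<nu>0^|m-n|\<close> is the
  ratio of the smaller to the larger of \<open>a_m\<close>, \<open>a_n\<close>. So its absolute value lies between 1 and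
  \<open>1 + O(\<nu>0^|m-n|)\<close>: the product converges and is bounded, uniformly in \<open>n\<close>, by the
  exponential of a two-sided geometric series. For \<open>\<Phi>\<close>, below the diagonal
  \<open>|b_i/b_j| \<le> \<nu>2^(i-j)\<close>; above it the denominator \<open>1 + a_i/a_j \<ge> \<nu>0^-(j-i)\<close> beats
  \<open>|b_i/b_j| \<le> \<nu>1^-(j-i)\<close>, so \<open>\<Phi>\<close> decays at rate \<open>max \<nu>2 (\<nu>0/\<nu>1)\<close>.\<close>

definition cayley :: "real \<Rightarrow> real" where
  "cayley x = (1 + x) / (1 - x)"

lemma cayley_inverse: "x \<noteq> 0 \<Longrightarrow> cayley (inverse x) = - cayley x"
  unfolding cayley_def by (cases "x = 1") (simp_all add: field_simps)

lemma cayley_bounds: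
  assumes "0 \<le> x" "x \<le> p" "p < 1"
  shows "1 \<le> cayley x" "cayley x \<le> 1 + 2 / (1 - p) * x"
proof -
  have eq: "cayley x = 1 + 2 * x / (1 - x)"
    using assms by (simp add: cayley_def field_simps)
  show "1 \<le> cayley x" using assms by (simp add: eq)
  have "2 * x / (1 - x) \<le> 2 * x / (1 - p)"
    using assms by (intro divide_left_mono) auto
  then show "cayley x \<le> 1 + 2 / (1 - p) * x" by (simp add: eq)
qed

lemma ratio_le_power:
  fixes f :: "nat \<Rightarrow> real"
  assumes pos: "\<And>n. n \<ge> j \<Longrightarrow> 0 < f n" and ratio: "\<And>n. n \<ge> j \<Longrightarrow> f (Suc n) / f n \<le> r"
  shows "f (j + k) / f j \<le> r ^ k"
proof (induction k)
  case (Suc k)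
  have "f (j + Suc k) / f j = f (Suc (j + k)) / f (j + k) * (f (j + k) / f j)"
    using pos[of "j + k"] by simp
  also have "\<dots> \<le> r * r ^ k"
    using pos[of "j + k"] pos[of "Suc (j + k)"] pos[of j] ratio[of "j + k"] Suc
    by (intro mult_mono) (auto intro: order_trans[OF _ ratio[of "j + k"]])
  finally show ?case by simp
qed (use pos[of j] in simp)

lemma power_le_ratio:
  fixes f :: "nat \<Rightarrow> real"
  assumes pos: "\<And>n. n \<ge> j \<Longrightarrow> 0 < f n" and "0 \<le> r"
    and ratio: "\<And>n. n \<ge> j \<Longrightarrow> r \<le> f (Suc n) / f n"
  shows "r ^ k \<le> f (j + k) / f j"
proof (induction k)
  case (Suc k)
  have "r * r ^ k \<le> f (Suc (j + k)) / f (j + k) * (f (j + k) / f j)"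
    using \<open>0 \<le> r\<close> ratio[of "j + k"] Suc by (intro mult_mono) auto
  also have "\<dots> = f (j + Suc k) / f j"
    using pos[of "j + k"] by simp
  finally show ?case by simp
qed (use pos[of j] in simp)

lemma geometric_sum_le:
  fixes r :: real
  assumes "finite K" "0 \<le> r" "r < 1"
  shows "(\<Sum>k\<in>K. r ^ k) \<le> 1 / (1 - r)"
  using sum_le_suminf[of "\<lambda>k. r ^ k" K] summable_geometric[of r] suminf_geometric[of r] assms
  by auto

lemma sum_power_dist_le:
  fixes r :: real
  assumes "finite I" "0 \<le> r" "r < 1"
  shows "(\<Sum>i\<in>I. r ^ nat \<bar>int i - int n\<bar>) \<le> 2 / (1 - r)"
proof -
  let ?L = "I \<inter> {..<n}" and ?R = "I - {..<n}"
  have "(\<Sum>i\<in>I. r ^ nat \<bar>int i - int n\<bar>)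
      = (\<Sum>i\<in>?L. r ^ nat \<bar>int i - int n\<bar>) + (\<Sum>i\<in>?R. r ^ nat \<bar>int i - int n\<bar>)"
    using assms(1) by (rule sum.Int_Diff)
  also have "\<dots> = (\<Sum>i\<in>?L. r ^ (n - i)) + (\<Sum>i\<in>?R. r ^ (i - n))"
    by (intro arg_cong2[where f = "(+)"] sum.cong) (auto simp: nat_diff_distrib)
  also have "(\<Sum>i\<in>?L. r ^ (n - i)) = (\<Sum>k\<in>(\<lambda>i. n - i) ` ?L. r ^ k)"
    by (subst sum.reindex) (auto simp: inj_on_def)
  also have "(\<Sum>i\<in>?R. r ^ (i - n)) = (\<Sum>k\<in>(\<lambda>i. i - n) ` ?R. r ^ k)"
    by (subst sum.reindex) (auto simp: inj_on_def)
  finally show ?thesis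
    using geometric_sum_le[of "(\<lambda>i. n - i) ` ?L" r] geometric_sum_le[of "(\<lambda>i. i - n) ` ?R" r] assms
    by simp
qed

context
  fixes a :: "nat \<Rightarrow> real" and \<nu>0 :: real
  assumes a_pos: "\<And>n. n \<ge> 1 \<Longrightarrow> a n > 0"
    and \<nu>0: "0 < \<nu>0" "\<nu>0 < 1"
    and ratio_a: "\<And>n. n \<ge> 1 \<Longrightarrow> a (Suc n) / a n < \<nu>0"
begin

lemma a_ratio_le_power:
  assumes "1 \<le> n" "n \<le> m"
  shows "0 < a m / a n" "a m / a n \<le> \<nu>0 ^ (m - n)"
proof -
  have "a (n + (m - n)) / a n \<le> \<nu>0 ^ (m - n)"
    using assms by (intro ratio_le_power) (auto intro: a_pos less_imp_le[OF ratio_a])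
  then show "a m / a n \<le> \<nu>0 ^ (m - n)"
    using assms by simp
  show "0 < a m / a n"
    using assms a_pos[of n] a_pos[of m] by simp
qed

lemma cayley_a_ratio_bounds:
  assumes "1 \<le> i" "i < j"
  shows "1 \<le> cayley (a j / a i)" "cayley (a j / a i) \<le> 1 + 2 / (1 - \<nu>0) * \<nu>0 ^ (j - i)"
proof -
  have "\<nu>0 ^ (j - i) \<le> \<nu>0 ^ 1"
    using \<nu>0 assms by (intro power_decreasing) auto
  then have "a j / a i \<le> \<nu>0"
    using a_ratio_le_power[of i j] assms by simp
  then have "1 \<le> cayley (a j / a i) \<and> cayley (a j / a i) \<le> 1 + 2 / (1 - \<nu>0) * (a j / a i)"
    using cayley_bounds[of "a j / a i" \<nu>0] a_ratio_le_power[of i j] assms \<nu>0 by simp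
  moreover have "2 / (1 - \<nu>0) * (a j / a i) \<le> 2 / (1 - \<nu>0) * \<nu>0 ^ (j - i)"
    using a_ratio_le_power[of i j] assms \<nu>0 by (intro mult_left_mono) auto
  ultimately show "1 \<le> cayley (a j / a i)" "cayley (a j / a i) \<le> 1 + 2 / (1 - \<nu>0) * \<nu>0 ^ (j - i)"
    by auto
qed

lemma pi_factor_bounds:
  assumes "1 \<le> n"
  shows "1 \<le> \<bar>pi_factor a n m\<bar>"
    and "\<bar>pi_factor a n m\<bar> \<le> 1 + 2 / (1 - \<nu>0) * \<nu>0 ^ nat \<bar>int m - int n\<bar>"
    and "n < m \<Longrightarrow> \<bar>pi_factor a n m - 1\<bar> \<le> 2 / (1 - \<nu>0) * \<nu>0 ^ (m - n)"
proof -
  let ?c = "2 / (1 - \<nu>0)"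
  have c: "0 \<le> ?c * \<nu>0 ^ k" for k
    using \<nu>0 by simp
  consider "m = 0 \<or> m = n" | "n < m" | "1 \<le> m" "m < n"
    by linarith
  then have "1 \<le> \<bar>pi_factor a n m\<bar> \<and> \<bar>pi_factor a n m\<bar> \<le> 1 + ?c * \<nu>0 ^ nat \<bar>int m - int n\<bar>
      \<and> (n < m \<longrightarrow> \<bar>pi_factor a n m - 1\<bar> \<le> ?c * \<nu>0 ^ (m - n))"
  proof cases
    case 1
    then show ?thesis using c by (auto simp: pi_factor_def)
  next
    case 2
    then have "pi_factor a n m = cayley (a m / a n)"
      by (simp add: pi_factor_def cayley_def)
    with 2 show ?thesis
      using cayley_a_ratio_bounds[OF assms 2] by (simp add: nat_diff_distrib)
  next
    case 3
    then have "pi_factor a n m = cayley (inverse (a n / a m))"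
      by (simp add: pi_factor_def cayley_def)
    also have "\<dots> = - cayley (a n / a m)"
      using 3 a_pos[of m] a_pos[of n] assms by (intro cayley_inverse) simp
    finally show ?thesis
      using 3 cayley_a_ratio_bounds[OF 3] by (simp add: nat_diff_distrib)
  qed
  then show "1 \<le> \<bar>pi_factor a n m\<bar>"
    and "\<bar>pi_factor a n m\<bar> \<le> 1 + ?c * \<nu>0 ^ nat \<bar>int m - int n\<bar>"
    and "n < m \<Longrightarrow> \<bar>pi_factor a n m - 1\<bar> \<le> ?c * \<nu>0 ^ (m - n)"
    by auto
qed

lemma convergent_prod_pi_factor:
  assumes "1 \<le> n"
  shows "convergent_prod (pi_factor a n)"
proof -
  have "summable (\<lambda>m. 2 / (1 - \<nu>0) * \<nu>0 ^ (m - n))"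
    using \<nu>0 summable_iff_shift[of "\<lambda>m. 2 / (1 - \<nu>0) * \<nu>0 ^ (m - n)" n]
    by (simp add: summable_geometric)
  then have "summable (\<lambda>m. \<bar>pi_factor a n m - 1\<bar>)"
    by (rule summable_comparison_test'[where N = "Suc n"]) (use pi_factor_bounds(3) assms in auto)
  moreover have "pi_factor a n m - 1 \<noteq> -1" for m
    using pi_factor_bounds(1)[OF assms, of m] by auto
  ultimately have "convergent_prod (\<lambda>m. 1 + (pi_factor a n m - 1))"
    by (rule summable_imp_convergent_prod_real)
  then show ?thesis
    by simp
qed

lemma abs_pi_seq_le:
  assumes "1 \<le> n"
  shows "\<bar>pi_seq a n\<bar> \<le> 2 * exp (2 / (1 - \<nu>0) * (2 / (1 - \<nu>0)))"
proof -
  let ?c = "2 / (1 - \<nu>0)"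
  have partial: "\<bar>\<Prod>i\<le>N. pi_factor a n i\<bar> \<le> exp (?c * ?c)" for N
  proof -
    have "\<bar>\<Prod>i\<le>N. pi_factor a n i\<bar> = (\<Prod>i\<le>N. 1 + (\<bar>pi_factor a n i\<bar> - 1))"
      by (simp add: abs_prod)
    also have "\<dots> \<le> exp (\<Sum>i\<le>N. \<bar>pi_factor a n i\<bar> - 1)"
      using pi_factor_bounds(1)[OF assms] by (intro prod_le_exp_sum) auto
    also have "\<dots> \<le> exp (\<Sum>i\<le>N. ?c * \<nu>0 ^ nat \<bar>int i - int n\<bar>)"
      using pi_factor_bounds(2)[OF assms] by (intro exp_mono sum_mono) (auto simp: algebra_simps)
    also have "\<dots> = exp (?c * (\<Sum>i\<le>N. \<nu>0 ^ nat \<bar>int i - int n\<bar>))"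
      by (simp add: sum_distrib_left)
    also have "\<dots> \<le> exp (?c * ?c)"
      using sum_power_dist_le[of "{..N}" \<nu>0 n] \<nu>0 by (intro exp_mono mult_left_mono) auto
    finally show ?thesis .
  qed
  have "(\<lambda>N. \<bar>\<Prod>i\<le>N. pi_factor a n i\<bar>) \<longlonglongrightarrow> \<bar>prodinf (pi_factor a n)\<bar>"
    by (intro tendsto_rabs convergent_prod_LIMSEQ convergent_prod_pi_factor assms)
  then have "\<bar>prodinf (pi_factor a n)\<bar> \<le> exp (?c * ?c)"
    by (rule LIMSEQ_le_const2) (use partial in auto)
  then show ?thesis
    by (simp add: pi_seq_def)
qed

end

lemma phi_le_norm_ratio:
  assumes "0 < a i" "0 < a j"
  shows "phi a b i j \<le> cmod (b i / b j)"
proof -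
  have "0 < a i / a j"
    using assms by simp
  then have "cmod (b i / b j) / (1 + a i / a j) \<le> cmod (b i / b j) / 1"
    by (intro divide_left_mono) auto
  then show ?thesis
    by (simp add: phi_def)
qed

lemma phi_le_norm_ratio_mult:
  assumes "0 < a i" "0 < a j"
  shows "phi a b i j \<le> cmod (b i / b j) * (a j / a i)"
proof -
  have "0 < a i / a j"
    using assms by simp
  then have "cmod (b i / b j) / (1 + a i / a j) \<le> cmod (b i / b j) / (a i / a j)"
    by (intro divide_left_mono mult_pos_pos) auto
  then show ?thesis
    by (simp add: phi_def)
qed

context
  fixes a :: "nat \<Rightarrow> real" and b :: "nat \<Rightarrow> complex" and \<nu>0 \<nu>1 \<nu>2 :: real
  assumes a_pos: "\<And>n. n \<ge> 1 \<Longrightarrow> a n > 0"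
    and b_nz: "\<And>n. n \<ge> 1 \<Longrightarrow> b n \<noteq> 0"
    and \<nu>: "0 < \<nu>0" "\<nu>0 < \<nu>1" "\<nu>1 < \<nu>2" "\<nu>2 < 1"
    and ratio_a: "\<And>n. n \<ge> 1 \<Longrightarrow> a (Suc n) / a n < \<nu>0"
    and ratio_b: "\<And>n. n \<ge> 1 \<Longrightarrow> \<nu>1 < cmod (b (Suc n) / b n) \<and> cmod (b (Suc n) / b n) < \<nu>2"
begin

lemma norm_b_ratio_le_power:
  assumes "1 \<le> j" "j \<le> i"
  shows "cmod (b i / b j) \<le> \<nu>2 ^ (i - j)"
proof -
  have "cmod (b (j + (i - j))) / cmod (b j) \<le> \<nu>2 ^ (i - j)"
    using assms b_nz ratio_b by (intro ratio_le_power) (auto simp: norm_divide less_imp_le)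
  then show ?thesis
    using assms by (simp add: norm_divide)
qed

lemma power_le_norm_b_ratio:
  assumes "1 \<le> i" "i \<le> j"
  shows "\<nu>1 ^ (j - i) \<le> cmod (b j / b i)"
proof -
  have "\<nu>1 ^ (j - i) \<le> cmod (b (i + (j - i))) / cmod (b i)"
    using assms b_nz ratio_b \<nu> by (intro power_le_ratio) (auto simp: norm_divide less_imp_le)
  then show ?thesis
    using assms by (simp add: norm_divide)
qed

lemma phi_le_power:
  assumes "1 \<le> i" "1 \<le> j"
  shows "phi a b i j \<le> max \<nu>2 (\<nu>0 / \<nu>1) ^ nat \<bar>int i - int j\<bar>"
proof (cases "j \<le> i")
  case True
  have "phi a b i j \<le> \<nu>2 ^ (i - j)"
    using phi_le_norm_ratio[of a i j b] norm_b_ratio_le_power[OF assms(2) True] a_pos assms by simp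
  also have "\<dots> \<le> max \<nu>2 (\<nu>0 / \<nu>1) ^ (i - j)"
    using \<nu> by (intro power_mono) auto
  finally show ?thesis
    using True by (simp add: nat_diff_distrib)
next
  case False
  let ?k = "j - i"
  have "cmod (b i / b j) = 1 / cmod (b j / b i)"
    by (simp add: norm_divide)
  also have "\<dots> \<le> 1 / \<nu>1 ^ ?k"
    using power_le_norm_b_ratio[of i j] \<nu> assms False by (intro divide_left_mono) (auto simp: b_nz)
  finally have b_ratio: "cmod (b i / b j) \<le> 1 / \<nu>1 ^ ?k" .
  have a_ratio: "a j / a i \<le> \<nu>0 ^ ?k"
    using a_ratio_le_power(2)[of a \<nu>0 i j] a_pos ratio_a \<nu> assms False by auto
  have "phi a b i j \<le> cmod (b i / b j) * (a j / a i)"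
    using phi_le_norm_ratio_mult a_pos assms by blast
  also have "\<dots> \<le> 1 / \<nu>1 ^ ?k * \<nu>0 ^ ?k"
    using b_ratio a_ratio a_pos[of i] a_pos[of j] assms \<nu> by (intro mult_mono) auto
  also have "\<dots> = (\<nu>0 / \<nu>1) ^ ?k"
    by (simp add: power_divide)
  also have "\<dots> \<le> max \<nu>2 (\<nu>0 / \<nu>1) ^ ?k"
    using \<nu> by (intro power_mono) auto
  finally show ?thesis
    using False by (simp add: nat_diff_distrib)
qed

end

theorem theorem5:
  fixes a :: "nat \<Rightarrow> real" and b :: "nat \<Rightarrow> complex" and \<nu>0 \<nu>1 \<nu>2 :: real
  assumes a_pos: "\<And>n. n \<ge> 1 \<Longrightarrow> a n > 0"
    and b_nz: "\<And>n. n \<ge> 1 \<Longrightarrow> b n \<noteq> 0"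
    and nu: "0 < \<nu>0" "\<nu>0 < \<nu>1" "\<nu>1 < \<nu>2" "\<nu>2 < 1"
    and ratio_a: "\<And>n. n \<ge> 1 \<Longrightarrow> a (Suc n) / a n < \<nu>0"
    and ratio_b: "\<And>n. n \<ge> 1 \<Longrightarrow> \<nu>1 < cmod (b (Suc n) / b n) \<and> cmod (b (Suc n) / b n) < \<nu>2"
  shows "pi_in_linfty a \<and> spatially_exp_decays (phi a b)"
proof
  have \<nu>0: "0 < \<nu>0" "\<nu>0 < 1"
    using nu by auto
  show "pi_in_linfty a"
    unfolding pi_in_linfty_def
    using convergent_prod_pi_factor[of a \<nu>0] abs_pi_seq_le[of a \<nu>0] a_pos \<nu>0 ratio_a by blast
  have "0 < max \<nu>2 (\<nu>0 / \<nu>1)" "max \<nu>2 (\<nu>0 / \<nu>1) < 1"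
    using nu by auto
  then show "spatially_exp_decays (phi a b)"
    unfolding spatially_exp_decays_def
    using phi_le_power[of a b \<nu>0 \<nu>1 \<nu>2] a_pos b_nz nu ratio_a ratio_b
    by (intro exI[of _ 1] exI[of _ "max \<nu>2 (\<nu>0 / \<nu>1)"]) auto
qed

end
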